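(* Under the setting of the previous statement (constants $\sigma_w^2>0$, $\gamma>0$, $P_j^{\max}>0$, $0<\lambda<\tilde\lambda$; $P_{FA}$ and $P_{MD}$ as functions of $\tau_{dt}>0$), let the detection error probability be $P_e(\tau_{dt})=P_{FA}(\tau_{dt})+P_{MD}(\tau_{dt})$. Define $$\Delta=\frac{e^{\gamma P_j^{\max}/\lambda}-1}{e^{\gamma P_j^{\max}/\tilde\lambda}-1}.$$ Then the threshold $$\tau_{dt}^*=\frac{\tilde\lambda\lambda}{\tilde\lambda-\lambda}\ln\Delta+\sigma_w^2$$ satisfies $\tau_{dt}^*\in[\sigma_w^2+\gamma P_j^{\max},\infty)$ and minimizes $P_e$ over all $\tau_{dt}>0$, and the minimum value is $$P_e^*=P_e(\tau_{dt}^* )=1-\frac{\tilde\lambda\big(e^{\gamma P_j^{\max}/\tilde\lambda}-1\big)\Delta^{\frac{\lambda}{\lambda-\tilde\lambda}}-\lambda\big(e^{\gamma P_j^{\max}/\lambda}-1\big)\Delta^{\frac{\tilde\lambda}{\lambda-\tilde\lambda}}}{\gamma P_j^{\max}}.$$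
   Context: Setting: $P_j$ is uniform on $[0,P_j^{\max}]$; under $\mathcal H_0$, $\overline P_w=X_0+\gamma P_j+\sigma_w^2$ with $X_0$ exponential of mean $\lambda$ independent of $P_j$; under $\mathcal H_1$, $\overline P_w=X_1+\gamma P_j+\sigma_w^2$ with $X_1$ exponential of mean $\tilde\lambda$ independent of $P_j$. $P_{FA}(\tau_{dt})=\Pr(\overline P_w>\tau_{dt}\mid\mathcal H_0)$ and $P_{MD}(\tau_{dt})=\Pr(\overline P_w<\tau_{dt}\mid\mathcal H_1)$. *)

theory Defs
  imports "HOL-Probability.Probability"
begin

text \<open>Joint law of (X, P_j): X exponential with mean m (rate 1/m),
  P_j uniform on [0, Pmax], independent (product measure).\<close>
definition joint_law :: "real \<Rightarrow> real \<Rightarrow> (real \<times> real) measure" where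
  "joint_law m Pmax =
     density lborel (exponential_density (1 / m)) \<Otimes>\<^sub>M uniform_measure lborel {0..Pmax}"

text \<open>False alarm: Pr(X0 + gamma P_j + sigma2 > tau | H0), X0 of mean lam.\<close>
definition P_FA :: "real \<Rightarrow> real \<Rightarrow> real \<Rightarrow> real \<Rightarrow> real \<Rightarrow> real" where
  "P_FA sigma2 gamma Pmax lam tau =
     measure (joint_law lam Pmax) {(x, p). x + gamma * p + sigma2 > tau}"

text \<open>Missed detection: Pr(X1 + gamma P_j + sigma2 < tau | H1), X1 of mean lamt.\<close>
definition P_MD :: "real \<Rightarrow> real \<Rightarrow> real \<Rightarrow> real \<Rightarrow> real \<Rightarrow> real" where
  "P_MD sigma2 gamma Pmax lamt tau =
     measure (joint_law lamt Pmax) {(x, p). x + gamma * p + sigma2 < tau}"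

definition P_e :: "real \<Rightarrow> real \<Rightarrow> real \<Rightarrow> real \<Rightarrow> real \<Rightarrow> real \<Rightarrow> real" where
  "P_e sigma2 gamma Pmax lam lamt tau =
     P_FA sigma2 gamma Pmax lam tau + P_MD sigma2 gamma Pmax lamt tau"

end

theory Submission
  imports Defs
begin

text \<open>Put t = tau - sigma2 and a = gamma Pmax, and let W_m(t) be the integral over [t - a, t]
  of the survival function of an exponential variable of mean m. Averaging over the uniform
  jamming power gives P_FA = W_lam(t) / a and P_MD = 1 - W_lamt(t) / a, so minimising P_e means
  minimising W_lam - W_lamt. This difference vanishes for t \<le> 0 and decreases on [0, a]; on
  [a, \<infinity>) it is lam A exp(-t/lam) - lamt B exp(-t/lamt) with positive A, B, whose only critical
  point is tau* - sigma2, which lies in [a, \<infinity>).\<close>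

lemma measure_exponential_density_greaterThan:
  assumes "0 < l"
  shows "measure (density lborel (exponential_density l)) {x. c < x} = exp (- max c 0 * l)"
proof -
  interpret prob_space "density lborel (exponential_density l)"
    using prob_space_exponential_density[OF assms] .
  have distr: "distributed (density lborel (exponential_density l)) lborel (\<lambda>x. x) (exponential_density l)"
    unfolding distributed_def using assms by (auto simp: distr_id2 exponential_density_def)
  note tail = exponential_distributedD_gt[OF distr _ assms]
  show ?thesis
  proof (cases "0 \<le> c")
    case True
    then show ?thesis using tail[of c] by simp
  next
    case False
    have "1 = prob {x. 0 < x}" using tail[of 0] by simp
    also have "\<dots> \<le> prob {x. c < x}"
      using False by (intro finite_measure_mono) auto
    finally show ?thesis using False antisym[OF prob_le_1] by simp
  qed
qed

lemma measure_exponential_density_lessThan: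
  assumes "0 < l"
  shows "measure (density lborel (exponential_density l)) {x. x < c} = 1 - exp (- max c 0 * l)"
proof -
  interpret prob_space "density lborel (exponential_density l)"
    using prob_space_exponential_density[OF assms] .
  have "AE x in lborel. x \<noteq> c" by (rule AE_I'[where N="{c}"]) auto
  then have "AE x in lborel. x \<in> {c} \<longrightarrow> exponential_density l x = 0"
    by eventually_elim auto
  then have "{c} \<in> null_sets (density lborel (exponential_density l))"
    by (subst null_sets_density_iff) auto
  then have "prob {x. x < c} = prob ({x. x < c} \<union> {c})"
    by (subst finite_measure_Union) (auto simp: measure_eq_0_null_sets)
  also have "{x. x < c} \<union> {c} = UNIV - {x. c < x}" by auto
  also have "prob (UNIV - {x. c < x}) = 1 - prob {x. c < x}"
    using prob_compl[of "{x. c < x}"] by simp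
  finally show ?thesis using measure_exponential_density_greaterThan[OF assms, of c] by simp
qed

lemma measure_joint_law:
  assumes m: "0 < m" and P: "0 < Pmax"
    and S: "S \<in> sets (borel \<Otimes>\<^sub>M borel)"
    and g: "g \<in> borel_measurable borel" "\<And>p. 0 \<le> g p"
    and slice: "\<And>p. p \<in> {0..Pmax} \<Longrightarrow>
      measure (density lborel (exponential_density (1 / m))) ((\<lambda>x. (x, p)) -` S) = g p"
    and I: "(g has_integral I) {0..Pmax}"
  shows "measure (joint_law m Pmax) S = I / Pmax"
proof -
  define E where "E = density lborel (exponential_density (1 / m))"
  define U where "U = uniform_measure lborel {0..Pmax}"
  interpret E: prob_space E unfolding E_def using m by (intro prob_space_exponential_density) simp
  interpret U: prob_space U unfolding U_def using P by (intro prob_space_uniform_measure) auto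
  interpret EU: pair_prob_space E U by unfold_locales
  have S': "S \<in> sets (E \<Otimes>\<^sub>M U)"
    using S by (subst sets_pair_measure_cong[of E borel U borel]) (auto simp: E_def U_def)
  have I0: "0 \<le> I" using has_integral_nonneg[OF I] g(2) by auto
  have I_UNIV: "((\<lambda>p. g p * indicator {0..Pmax} p) has_integral I) UNIV"
  proof -
    have "(\<lambda>p. g p * indicator {0..Pmax} p) = (\<lambda>p. if p \<in> {0..Pmax} then g p else 0)"
      by (auto simp: indicator_def)
    then show ?thesis using I has_integral_restrict_UNIV[of "{0..Pmax}" g I] by simp
  qed
  have "emeasure (E \<Otimes>\<^sub>M U) S = (\<integral>\<^sup>+p. emeasure E ((\<lambda>x. (x, p)) -` S) \<partial>U)"
    by (rule EU.emeasure_pair_measure_alt2[OF S'])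
  also have "\<dots> = (\<integral>\<^sup>+p. ennreal (g p) \<partial>U)"
    unfolding U_def using slice unfolding E_def[symmetric]
    by (intro nn_integral_cong_AE AE_uniform_measureI AE_I2) (auto simp: E.emeasure_eq_measure)
  also have "\<dots> = (\<integral>\<^sup>+p. ennreal (g p) * indicator {0..Pmax} p \<partial>lborel) / emeasure lborel {0..Pmax}"
    unfolding U_def using g by (intro nn_integral_uniform_measure) auto
  also have "(\<integral>\<^sup>+p. ennreal (g p) * indicator {0..Pmax} p \<partial>lborel)
      = (\<integral>\<^sup>+p. ennreal (g p * indicator {0..Pmax} p) \<partial>lborel)"
    by (intro nn_integral_cong) (auto simp: indicator_def)
  also have "\<dots> = ennreal I"
    using g by (intro nn_integral_has_integral_lborel[OF _ _ I_UNIV]) auto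
  also have "ennreal I / emeasure lborel {0..Pmax} = ennreal (I / Pmax)"
    using P I0 by (simp add: divide_ennreal)
  finally show ?thesis
    unfolding joint_law_def E_def[symmetric] U_def[symmetric] measure_def using I0 P by simp
qed

text \<open>exp_survival m u is Pr(X > u) for X exponential of mean m; exp_survival_primitive m is a
  primitive of it (the identity on u \<le> 0), so survival_window m a t is its integral over
  [t - a, t].\<close>

definition exp_survival :: "real \<Rightarrow> real \<Rightarrow> real" where
  "exp_survival m u = exp (- max u 0 / m)"

definition exp_survival_primitive :: "real \<Rightarrow> real \<Rightarrow> real" where
  "exp_survival_primitive m u = min u 0 + m * (1 - exp (- max u 0 / m))"

definition survival_window :: "real \<Rightarrow> real \<Rightarrow> real \<Rightarrow> real" where
  "survival_window m a t = exp_survival_primitive m t - exp_survival_primitive m (t - a)"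

lemma exp_survival_primitive_has_derivative:
  assumes m: "0 < m" and u: "u \<noteq> 0"
  shows "(exp_survival_primitive m has_real_derivative exp_survival m u) (at u)"
proof (cases "u < 0")
  case True
  have "((\<lambda>x. x) has_real_derivative exp_survival m u) (at u)"
    using True by (simp add: exp_survival_def)
  then show ?thesis
    by (rule has_field_derivative_transform_within_open[where S="{..<0}"])
       (use True in \<open>auto simp: exp_survival_primitive_def\<close>)
next
  case False
  then have u0: "0 < u" using u by simp
  have "((\<lambda>x. m * (1 - exp (- x / m))) has_real_derivative m * (0 - exp (- u / m) * (- 1 / m))) (at u)"
    using m by (intro derivative_eq_intros) auto
  then have "((\<lambda>x. m * (1 - exp (- x / m))) has_real_derivative exp_survival m u) (at u)"
    using m u0 by (simp add: exp_survival_def)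
  then show ?thesis
    by (rule has_field_derivative_transform_within_open[where S="{0<..}"])
       (use u0 in \<open>auto simp: exp_survival_primitive_def\<close>)
qed

lemma exp_survival_has_integral:
  assumes m: "0 < m" and gam: "0 < gam" and P: "0 < Pmax"
  shows "((\<lambda>p. exp_survival m (t - gam * p)) has_integral survival_window m (gam * Pmax) t / gam) {0..Pmax}"
proof -
  define F where "F p = - exp_survival_primitive m (t - gam * p) / gam" for p
  have "((\<lambda>p. exp_survival m (t - gam * p)) has_integral (F Pmax - F 0)) {0..Pmax}"
  proof (rule fundamental_theorem_of_calculus_interior_strong[where S="{t / gam}"])
    fix p assume p: "p \<in> {0<..<Pmax} - {t / gam}"
    then have ne: "t - gam * p \<noteq> 0" using gam by (auto simp: field_simps)
    have "((\<lambda>p. t - gam * p) has_real_derivative - gam) (at p)"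
      by (auto intro!: derivative_eq_intros)
    from DERIV_chain2[OF exp_survival_primitive_has_derivative[OF m ne] this]
    have "(F has_real_derivative - (exp_survival m (t - gam * p) * - gam) / gam) (at p)"
      unfolding F_def by (intro DERIV_cdivide DERIV_minus)
    then show "(F has_vector_derivative exp_survival m (t - gam * p)) (at p)"
      using gam by (simp add: has_real_derivative_iff_has_vector_derivative[symmetric])
  next
    show "continuous_on {0..Pmax} F"
      unfolding F_def exp_survival_primitive_def by (intro continuous_intros) (use m gam in auto)
  qed (use P in auto)
  then show ?thesis
    by (simp add: F_def survival_window_def diff_divide_distrib)
qed

lemma P_FA_eq:
  assumes "0 < gam" and "0 < Pmax" and "0 < lam"
  shows "P_FA s gam Pmax lam tau = survival_window lam (gam * Pmax) (tau - s) / (gam * Pmax)"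
proof -
  have "{(x, p). tau < x + gam * p + s} \<in> sets (borel \<Otimes>\<^sub>M borel)"
  proof -
    have "{(x, p). tau < x + gam * p + s} = {z \<in> space (borel \<Otimes>\<^sub>M borel). tau < fst z + gam * snd z + s}"
      by (auto simp: space_pair_measure)
    also have "\<dots> \<in> sets (borel \<Otimes>\<^sub>M borel)" by measurable
    finally show ?thesis .
  qed
  moreover have "(\<lambda>x. (x, p)) -` {(x, p). tau < x + gam * p + s} = {x. tau - s - gam * p < x}" for p
    by auto
  ultimately have "P_FA s gam Pmax lam tau = survival_window lam (gam * Pmax) (tau - s) / gam / Pmax"
    unfolding P_FA_def using assms
    by (intro measure_joint_law[where g="\<lambda>p. exp_survival lam (tau - s - gam * p)"])
       (auto simp: exp_survival_def measure_exponential_density_greaterThan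
             intro: exp_survival_has_integral[of lam gam Pmax "tau - s", simplified])
  then show ?thesis by simp
qed

lemma P_MD_eq:
  assumes gam: "0 < gam" and P: "0 < Pmax" and "0 < lam"
  shows "P_MD s gam Pmax lam tau = 1 - survival_window lam (gam * Pmax) (tau - s) / (gam * Pmax)"
proof -
  have "{(x, p). x + gam * p + s < tau} \<in> sets (borel \<Otimes>\<^sub>M borel)"
  proof -
    have "{(x, p). x + gam * p + s < tau} = {z \<in> space (borel \<Otimes>\<^sub>M borel). fst z + gam * snd z + s < tau}"
      by (auto simp: space_pair_measure)
    also have "\<dots> \<in> sets (borel \<Otimes>\<^sub>M borel)" by measurable
    finally show ?thesis .
  qed
  moreover have "(\<lambda>x. (x, p)) -` {(x, p). x + gam * p + s < tau} = {x. x < tau - s - gam * p}" for p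
    by auto
  moreover have "((\<lambda>p. 1 - exp_survival lam (tau - s - gam * p))
      has_integral (Pmax - survival_window lam (gam * Pmax) (tau - s) / gam)) {0..Pmax}"
    using has_integral_const_real[of "1::real" 0 Pmax] P
    by (intro has_integral_diff exp_survival_has_integral) (use assms in auto)
  ultimately have "P_MD s gam Pmax lam tau = (Pmax - survival_window lam (gam * Pmax) (tau - s) / gam) / Pmax"
    unfolding P_MD_def using assms
    by (intro measure_joint_law[where g="\<lambda>p. 1 - exp_survival lam (tau - s - gam * p)"])
       (auto simp: exp_survival_def measure_exponential_density_lessThan)
  then show ?thesis using gam P by (simp add: field_simps)
qed

lemma survival_window_of_nonpos: "t \<le> 0 \<Longrightarrow> 0 \<le> a \<Longrightarrow> survival_window m a t = a"
  by (simp add: survival_window_def exp_survival_primitive_def)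

lemma survival_window_of_le:
  "0 \<le> t \<Longrightarrow> t \<le> a \<Longrightarrow> survival_window m a t = a - t + m * (1 - exp (- t / m))"
  by (simp add: survival_window_def exp_survival_primitive_def)

lemma survival_window_of_ge:
  assumes "0 \<le> a" and "a \<le> t"
  shows "survival_window m a t = m * (exp (a / m) - 1) * exp (- t / m)"
proof -
  have "exp (- (t - a) / m) = exp (a / m) * exp (- t / m)"
    by (simp add: exp_add[symmetric] diff_divide_distrib)
  then show ?thesis
    using assms by (simp add: survival_window_def exp_survival_primitive_def algebra_simps)
qed

lemma exp_mean_gap_antimono:
  fixes lam lamt s t :: real
  assumes "0 < lam" and "lam \<le> lamt" and "0 \<le> s" and "s \<le> t"
  shows "lam * (1 - exp (- t / lam)) - lamt * (1 - exp (- t / lamt))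
    \<le> lam * (1 - exp (- s / lam)) - lamt * (1 - exp (- s / lamt))"
proof (rule deriv_nonpos_imp_antimono[where g'="\<lambda>x. exp (- x / lam) - exp (- x / lamt)"
      and g="\<lambda>x. lam * (1 - exp (- x / lam)) - lamt * (1 - exp (- x / lamt))"])
  fix x assume "x \<in> {s..t}"
  show "((\<lambda>x. lam * (1 - exp (- x / lam)) - lamt * (1 - exp (- x / lamt)))
      has_real_derivative exp (- x / lam) - exp (- x / lamt)) (at x)"
    using assms by (auto intro!: derivative_eq_intros)
  have "x / lamt \<le> x / lam"
    using \<open>x \<in> {s..t}\<close> assms by (intro divide_left_mono) auto
  then show "exp (- x / lam) - exp (- x / lamt) \<le> 0" by simp
qed (use assms in simp)

text \<open>The derivative of f is A exp(-t/lam) (exp(k (t - t0)) - 1) with k = 1/lam - 1/lamt > 0,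
  so f decreases up to t0 and increases after it.\<close>

lemma exp_combination_minimum:
  fixes A B lam lamt t :: real
  assumes A: "0 < A" and B: "0 < B" and l: "0 < lam" "lam < lamt"
  defines "t0 \<equiv> lamt * lam / (lamt - lam) * ln (A / B)"
  defines "f \<equiv> \<lambda>t. lam * A * exp (- t / lam) - lamt * B * exp (- t / lamt)"
  shows "f t0 \<le> f t"
proof -
  define k where "k = 1 / lam - 1 / lamt"
  have k: "0 < k" using l by (simp add: k_def field_simps)
  have t0k: "t0 * k = ln A - ln B"
    using l A B by (simp add: t0_def k_def ln_div field_simps)
  have f': "(f has_real_derivative B * exp (- x / lamt) - A * exp (- x / lam)) (at x)" for x
    unfolding f_def using l by (auto intro!: derivative_eq_intros)
  have f'_eq: "B * exp (- x / lamt) - A * exp (- x / lam)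
      = A * exp (- x / lam) * (exp ((x - t0) * k) - 1)" for x
  proof -
    have "B * exp (- x / lamt) = exp (ln B + - x / lamt)" using B by (simp only: exp_add exp_ln)
    also have "ln B + - x / lamt = ln A + - x / lam + (x - t0) * k"
      using t0k by (simp add: k_def right_diff_distrib diff_divide_distrib)
    finally have "B * exp (- x / lamt) = A * exp (- x / lam) * exp ((x - t0) * k)"
      using A by (simp only: exp_add exp_ln)
    then show ?thesis by (simp add: algebra_simps)
  qed
  show ?thesis
  proof (cases "t \<le> t0")
    case True
    show ?thesis
    proof (rule deriv_nonpos_imp_antimono[OF f' _ True])
      fix x assume "x \<in> {t..t0}"
      then have "exp ((x - t0) * k) \<le> 1" using k by (simp add: mult_nonpos_nonneg)
      then show "B * exp (- x / lamt) - A * exp (- x / lam) \<le> 0"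
        unfolding f'_eq using A by (simp add: mult_nonneg_nonpos)
    qed
  next
    case False
    show ?thesis
    proof (rule deriv_nonneg_imp_mono[OF f'])
      fix x assume "x \<in> {t0..t}"
      then have "1 \<le> exp ((x - t0) * k)" using k by simp
      then show "0 \<le> B * exp (- x / lamt) - A * exp (- x / lam)"
        unfolding f'_eq using A by simp
    qed (use False in simp)
  qed
qed

lemma detection_threshold_ge:
  fixes a lam lamt :: real
  assumes a: "0 < a" and l: "0 < lam" "lam < lamt"
  shows "a \<le> lamt * lam / (lamt - lam) * ln ((exp (a / lam) - 1) / (exp (a / lamt) - 1))"
proof -
  let ?A = "exp (a / lam) - 1" and ?B = "exp (a / lamt) - 1"
  have A: "0 < ?A" and B: "0 < ?B" using a l by simp_all
  have "exp (a / lam - a / lamt) * ?B = exp (a / lam) - exp (a / lam - a / lamt)"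
    by (simp add: exp_diff field_simps)
  also have "\<dots> \<le> ?A"
    using a l by (simp add: divide_left_mono)
  finally have "a / lam - a / lamt \<le> ln (?A / ?B)"
    using A B by (simp add: ln_ge_iff pos_le_divide_eq)
  then have "lamt * lam / (lamt - lam) * (a / lam - a / lamt) \<le> lamt * lam / (lamt - lam) * ln (?A / ?B)"
    using l by (intro mult_left_mono) auto
  moreover have "lamt * lam / (lamt - lam) * (a / lam - a / lamt) = a"
    using l by (simp add: field_simps)
  ultimately show ?thesis by simp
qed

lemma survival_window_gap_minimum:
  fixes a lam lamt t :: real
  assumes a: "0 < a" and l: "0 < lam" "lam < lamt"
  defines "t0 \<equiv> lamt * lam / (lamt - lam) * ln ((exp (a / lam) - 1) / (exp (a / lamt) - 1))"
  shows "survival_window lam a t0 - survival_window lamt a t0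
    \<le> survival_window lam a t - survival_window lamt a t"
proof -
  define W where "W t = survival_window lam a t - survival_window lamt a t" for t
  define f where "f t = lam * (exp (a / lam) - 1) * exp (- t / lam)
    - lamt * (exp (a / lamt) - 1) * exp (- t / lamt)" for t
  define g where "g t = lam * (1 - exp (- t / lam)) - lamt * (1 - exp (- t / lamt))" for t
  have W_ge: "W t = f t" if "a \<le> t" for t
    using that a by (simp add: W_def f_def survival_window_of_ge)
  have W_le: "W t = g t" if "0 \<le> t" "t \<le> a" for t
    using that by (simp add: W_def g_def survival_window_of_le)
  have f_min: "f t0 \<le> f t" for t
    unfolding f_def t0_def using a l by (intro exp_combination_minimum) auto
  have g_antimono: "g t \<le> g s" if "0 \<le> s" "s \<le> t" for s t
    unfolding g_def using that l by (intro exp_mean_gap_antimono) auto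
  have "W t0 = f t0"
    using W_ge detection_threshold_ge[OF a l] by (simp add: t0_def)
  also have "\<dots> \<le> g a"
    using f_min[of a] W_ge[of a] W_le[of a] a by simp
  finally have W_t0: "W t0 \<le> g a" .
  consider "a \<le> t" | "0 \<le> t" "t \<le> a" | "t \<le> 0" by linarith
  then have "W t0 \<le> W t"
  proof cases
    case 1
    then show ?thesis using W_ge f_min \<open>W t0 = f t0\<close> by simp
  next
    case 2
    then show ?thesis using W_t0 W_le g_antimono[of t a] by simp
  next
    case 3
    then show ?thesis
      using W_t0 g_antimono[of 0 a] a by (simp add: W_def g_def survival_window_of_nonpos)
  qed
  then show ?thesis by (simp add: W_def)
qed

theorem theorem2:
  fixes sigma2 gamma Pmax lam lamt :: real
  assumes "sigma2 > 0" and "gamma > 0" and "Pmax > 0" and "0 < lam" and "lam < lamt"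
  defines "Delta \<equiv> (exp (gamma * Pmax / lam) - 1) / (exp (gamma * Pmax / lamt) - 1)"
  defines "tau_star \<equiv> lamt * lam / (lamt - lam) * ln Delta + sigma2"
  shows "tau_star \<in> {sigma2 + gamma * Pmax..} \<and>
    (\<forall>tau > 0. P_e sigma2 gamma Pmax lam lamt tau_star \<le> P_e sigma2 gamma Pmax lam lamt tau) \<and>
    P_e sigma2 gamma Pmax lam lamt tau_star =
           1 - (lamt * (exp (gamma * Pmax / lamt) - 1) * Delta powr (lam / (lam - lamt))
                - lam * (exp (gamma * Pmax / lam) - 1) * Delta powr (lamt / (lam - lamt)))
               / (gamma * Pmax)"
proof -
  define a where "a = gamma * Pmax"
  have a: "0 < a" using assms by (simp add: a_def)
  define W where "W t = survival_window lam a t - survival_window lamt a t" for t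
  have P_e_eq: "P_e sigma2 gamma Pmax lam lamt tau = 1 + W (tau - sigma2) / a" for tau
    using assms P_FA_eq P_MD_eq
    by (simp add: P_e_def W_def a_def diff_divide_distrib)
  define t0 where "t0 = lamt * lam / (lamt - lam) * ln Delta"
  have t0: "tau_star - sigma2 = t0" by (simp add: tau_star_def t0_def)
  have "a \<le> t0"
    using detection_threshold_ge[OF a assms(4,5)] by (simp add: t0_def Delta_def a_def)
  have W_min: "W t0 \<le> W t" for t
    using survival_window_gap_minimum[OF a assms(4,5)] by (simp add: W_def t0_def Delta_def a_def)
  have "exp (- t0 / lam) = Delta powr (lamt / (lam - lamt))"
    and "exp (- t0 / lamt) = Delta powr (lam / (lam - lamt))"
    using assms by (simp_all add: t0_def powr_def field_simps)
  then have W_t0: "W t0 = lam * (exp (a / lam) - 1) * Delta powr (lamt / (lam - lamt))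
      - lamt * (exp (a / lamt) - 1) * Delta powr (lam / (lam - lamt))"
    using \<open>a \<le> t0\<close> a by (simp add: W_def survival_window_of_ge)
  show ?thesis
  proof (intro conjI allI impI)
    show "tau_star \<in> {sigma2 + gamma * Pmax..}"
      using \<open>a \<le> t0\<close> t0 by (simp add: a_def)
    show "P_e sigma2 gamma Pmax lam lamt tau_star \<le> P_e sigma2 gamma Pmax lam lamt tau" for tau
      using W_min a by (simp add: P_e_eq t0 divide_right_mono)
    show "P_e sigma2 gamma Pmax lam lamt tau_star =
           1 - (lamt * (exp (gamma * Pmax / lamt) - 1) * Delta powr (lam / (lam - lamt))
                - lam * (exp (gamma * Pmax / lam) - 1) * Delta powr (lamt / (lam - lamt)))
               / (gamma * Pmax)"
      using W_t0 by (simp add: P_e_eq t0 a_def diff_divide_distrib)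
  qed
qed

end
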